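(* Let $(q_i,P_i)_{i\in\mathcal I}$ be a mechanism with finite message sets $M_i$ and opt-out messages, let $\alpha_i(m_i'\mid m_i)\ge0$ be nonnegative numbers, and let $\epsilon>0$. Then there exist $a>0$, an integer $k\ge1$ and a mechanism $(\tilde q_i,\tilde P_i)_{i\in\mathcal I}$ with message sets $\tilde M_i=\{0,1,\ldots,k\}$ for every $i$ (with $0$ the opt-out message), such that, with the dual variables $\tilde\alpha_i(j'\mid j)=a$ if $j'=j+1$ and $\tilde\alpha_i(j'\mid j)=0$ otherwise, the virtual revenue $\widetilde{\mathrm{Rev}}$ of $(\tilde q_i,\tilde P_i,\tilde\alpha_i)$ satisfies $$\widetilde{\mathrm{Rev}}(v,\tilde m)\ge\min_{m\in M}\mathrm{Rev}(v,m)-I\epsilon\quad\text{for all }v\in V,\ \tilde m\in\prod_i\tilde M_i,$$ where $\mathrm{Rev}$ is the virtual revenue of $(q_i,P_i,\alpha_i)$. Moreover, if a mechanism with $M_i=\{0,\ldots,k\}$ for all $i$ is paired with such $\tilde\alpha_i$ (the same for all $i$), then its symmetrization $\tilde q_1(m')=\frac1{I!}\sum_\sigma q_{\sigma(1)}(m_{\sigma(1)}=m_1',\ldots,m_{\sigma(I)}=m_I')$ (and similarly for payments and other buyers, summing over permutations $\sigma$ of $\{1,\ldots,I\}$) has virtual revenue at least $\min_m\mathrm{Rev}(v,m)$ at every $(v,m)$.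
   Context: A mechanism for buyers $\mathcal I=\{1,\ldots,I\}$ with common value $v\in V=\{0,\nu,\ldots,1\}$ consists of finite message sets $M_i$ ($M=\prod_iM_i$), allocation rules $q_i:M\to[0,1]$ with $\sum_iq_i(m)\le1$, and payment rules $P_i:M\to\mathbb R$, where each $M_i$ contains an opt-out message $0$ with $q_i(0,m_{-i})=P_i(0,m_{-i})=0$ for all $m_{-i}$. $U_i(v,m)=v\,q_i(m)-P_i(m)$. Virtual revenue associated with nonnegative numbers $\alpha_i(m_i'\mid m_i)$: $\mathrm{Rev}(v,m)=\sum_i\Big(P_i(m)+\sum_{m_i'\in M_i}\big(U_i(v,(m_i',m_{-i}))-U_i(v,m)\big)\alpha_i(m_i'\mid m_i)\Big)$. *)

theory Defs
  imports Complex_Main "HOL-Library.FuncSet" "HOL-Combinatorics.Permutations"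
begin

definition profiles :: "nat \<Rightarrow> (nat \<Rightarrow> 'm set) \<Rightarrow> (nat \<Rightarrow> 'm) set" where
  "profiles n M = PiE {1..n} M"

definition value_grid :: "nat \<Rightarrow> real set" where
  "value_grid N = {real j / real N | j. j \<le> N}"

definition is_mechanism ::
  "nat \<Rightarrow> (nat \<Rightarrow> 'm set) \<Rightarrow> 'm \<Rightarrow> (nat \<Rightarrow> (nat \<Rightarrow> 'm) \<Rightarrow> real)
     \<Rightarrow> (nat \<Rightarrow> (nat \<Rightarrow> 'm) \<Rightarrow> real) \<Rightarrow> bool" where
  "is_mechanism n M oo q P \<longleftrightarrow>
     (\<forall>i\<in>{1..n}. finite (M i) \<and> oo \<in> M i) \<and>
     (\<forall>m\<in>profiles n M.
        (\<forall>i\<in>{1..n}. 0 \<le> q i m \<and> q i m \<le> 1) \<and>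
        (\<Sum>i=1..n. q i m) \<le> 1 \<and>
        (\<forall>i\<in>{1..n}. q i (m(i := oo)) = 0 \<and> P i (m(i := oo)) = 0))"

definition utility ::
  "(nat \<Rightarrow> (nat \<Rightarrow> 'm) \<Rightarrow> real) \<Rightarrow> (nat \<Rightarrow> (nat \<Rightarrow> 'm) \<Rightarrow> real)
     \<Rightarrow> nat \<Rightarrow> real \<Rightarrow> (nat \<Rightarrow> 'm) \<Rightarrow> real" where
  "utility q P i v m = v * q i m - P i m"

(* alpha i m' mi  stands for alpha_i(m' | mi) *)
definition virtual_revenue ::
  "nat \<Rightarrow> (nat \<Rightarrow> 'm set) \<Rightarrow> (nat \<Rightarrow> (nat \<Rightarrow> 'm) \<Rightarrow> real)
     \<Rightarrow> (nat \<Rightarrow> (nat \<Rightarrow> 'm) \<Rightarrow> real) \<Rightarrow> (nat \<Rightarrow> 'm \<Rightarrow> 'm \<Rightarrow> real)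
     \<Rightarrow> real \<Rightarrow> (nat \<Rightarrow> 'm) \<Rightarrow> real" where
  "virtual_revenue n M q P \<alpha> v m =
     (\<Sum>i=1..n. P i m +
        (\<Sum>m'\<in>M i. (utility q P i v (m(i := m')) - utility q P i v m) * \<alpha> i m' (m i)))"

definition min_virtual_revenue ::
  "nat \<Rightarrow> (nat \<Rightarrow> 'm set) \<Rightarrow> (nat \<Rightarrow> (nat \<Rightarrow> 'm) \<Rightarrow> real)
     \<Rightarrow> (nat \<Rightarrow> (nat \<Rightarrow> 'm) \<Rightarrow> real) \<Rightarrow> (nat \<Rightarrow> 'm \<Rightarrow> 'm \<Rightarrow> real)
     \<Rightarrow> real \<Rightarrow> real" where
  "min_virtual_revenue n M q P \<alpha> v = Min ((\<lambda>m. virtual_revenue n M q P \<alpha> v m) ` profiles n M)"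

definition ladder_alpha :: "real \<Rightarrow> nat \<Rightarrow> nat \<Rightarrow> nat \<Rightarrow> real" where
  "ladder_alpha a i j' j = (if j' = j + 1 then a else 0)"

(* symmetrization: f~_i(m') = 1/n! * sum_sigma f_{sigma i}(m) where m_{sigma j} = m'_j,
   i.e. m = m' o inv sigma *)
definition symmetrize :: "nat \<Rightarrow> (nat \<Rightarrow> (nat \<Rightarrow> 'm) \<Rightarrow> real) \<Rightarrow> nat \<Rightarrow> (nat \<Rightarrow> 'm) \<Rightarrow> real" where
  "symmetrize n f i m' =
     (\<Sum>\<sigma>\<in>{\<sigma>. \<sigma> permutes {1..n}}. f (\<sigma> i) (m' \<circ> inv \<sigma>)) / fact n"

end

theory Submission
  imports Defs
begin

text \<open>A rung \<open>j\<close> of the ladder \<open>{0..k}\<close> stands for the distribution after \<open>j\<close> steps of the Markov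
chain on \<open>M i\<close> that starts at the opt-out message and jumps from \<open>x\<close> to \<open>y\<close> with probability
\<open>\<alpha> i y x / a\<close>. The ladder mechanism runs the original one on independent draws from these chains.
Climbing one rung changes the expectation of any function by \<open>1/a\<close> times the expectation of its
generator, so with dual weight \<open>a\<close> the ladder deviation reproduces the deviation term of the
original virtual revenue, and the new virtual revenue is an average of original ones. A fee \<open>d j\<close>
added to the payments leaves a telescoping error \<open>(1 + a) d j - a d (j + 1)\<close>, which a geometric fee
makes smaller than \<open>\<epsilon>\<close>, while \<open>d k\<close> dominates the deviation terms at the top rung, where no ladder
deviation is available. Symmetrization averages the virtual revenue over relabellings of the buyers,
which leave buyer-independent dual variables unchanged.\<close>

section \<open>Smoothing along a Markov chain\<close>

primrec chain_dist :: "'m set \<Rightarrow> ('m \<Rightarrow> 'm \<Rightarrow> real) \<Rightarrow> 'm \<Rightarrow> real \<Rightarrow> nat \<Rightarrow> 'm \<Rightarrow> real" where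
  "chain_dist A b x0 h 0 = (\<lambda>y. if y = x0 then 1 else 0)"
| "chain_dist A b x0 h (Suc j) = (\<lambda>y. chain_dist A b x0 h j y * (1 - h * (\<Sum>z\<in>A. b z y))
      + h * (\<Sum>x\<in>A. chain_dist A b x0 h j x * b y x))"

lemma chain_dist_distribution:
  assumes "finite A" "x0 \<in> A" "\<forall>x\<in>A. \<forall>y\<in>A. 0 \<le> b y x" "0 \<le> h"
    and "\<forall>y\<in>A. h * (\<Sum>z\<in>A. b z y) \<le> 1"
  shows "(\<forall>y\<in>A. 0 \<le> chain_dist A b x0 h j y) \<and> (\<Sum>y\<in>A. chain_dist A b x0 h j y) = 1"
proof (induction j)
  case 0
  then show ?case using assms(1,2) by (simp add: sum.delta)
next
  case (Suc j)
  let ?\<nu> = "chain_dist A b x0 h j"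
  have "0 \<le> chain_dist A b x0 h (Suc j) y" if "y \<in> A" for y
  proof -
    have "0 \<le> ?\<nu> y * (1 - h * (\<Sum>z\<in>A. b z y))" using Suc that assms(5) by simp
    moreover have "0 \<le> (\<Sum>x\<in>A. ?\<nu> x * b y x)" using Suc that assms(3) by (intro sum_nonneg) simp
    ultimately show ?thesis using assms(4) by simp
  qed
  moreover have "(\<Sum>y\<in>A. chain_dist A b x0 h (Suc j) y)
      = (\<Sum>y\<in>A. ?\<nu> y) - h * (\<Sum>y\<in>A. \<Sum>z\<in>A. ?\<nu> y * b z y) + h * (\<Sum>y\<in>A. \<Sum>x\<in>A. ?\<nu> x * b y x)"
    by (simp add: sum.distrib sum_subtractf right_diff_distrib sum_distrib_left mult.assoc mult.left_commute)
  moreover have "(\<Sum>y\<in>A. \<Sum>x\<in>A. ?\<nu> x * b y x) = (\<Sum>y\<in>A. \<Sum>z\<in>A. ?\<nu> y * b z y)"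
    by (rule sum.swap)
  ultimately show ?case using Suc by simp
qed

definition stochastic_rates :: "nat \<Rightarrow> (nat \<Rightarrow> 'm set) \<Rightarrow> 'm \<Rightarrow> (nat \<Rightarrow> 'm \<Rightarrow> 'm \<Rightarrow> real) \<Rightarrow> real \<Rightarrow> bool" where
  "stochastic_rates n M x0 b h \<longleftrightarrow> 0 \<le> h \<and>
     (\<forall>i\<in>{1..n}. finite (M i) \<and> x0 \<in> M i \<and> (\<forall>x\<in>M i. \<forall>y\<in>M i. 0 \<le> b i y x) \<and>
        (\<forall>y\<in>M i. h * (\<Sum>z\<in>M i. b i z y) \<le> 1))"

definition profile_dist ::
  "nat \<Rightarrow> (nat \<Rightarrow> 'm set) \<Rightarrow> (nat \<Rightarrow> 'm \<Rightarrow> 'm \<Rightarrow> real) \<Rightarrow> 'm \<Rightarrow> real \<Rightarrow> (nat \<Rightarrow> nat) \<Rightarrow> (nat \<Rightarrow> 'm) \<Rightarrow> real" where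
  "profile_dist n M b x0 h jt m = (\<Prod>l\<in>{1..n}. chain_dist (M l) (b l) x0 h (jt l) (m l))"

lemma finite_profiles: "\<forall>i\<in>{1..n}. finite (M i) \<Longrightarrow> finite (profiles n M)"
  unfolding profiles_def by (intro finite_PiE) auto

lemma profile_dist_distribution:
  assumes "stochastic_rates n M x0 b h"
  shows "\<forall>m\<in>profiles n M. 0 \<le> profile_dist n M b x0 h jt m"
    and "(\<Sum>m\<in>profiles n M. profile_dist n M b x0 h jt m) = 1"
proof -
  have chain: "(\<forall>y\<in>M l. 0 \<le> chain_dist (M l) (b l) x0 h (jt l) y)
      \<and> (\<Sum>y\<in>M l. chain_dist (M l) (b l) x0 h (jt l) y) = 1" if "l \<in> {1..n}" for l
    using assms that unfolding stochastic_rates_def by (intro chain_dist_distribution) auto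
  then show "\<forall>m\<in>profiles n M. 0 \<le> profile_dist n M b x0 h jt m"
    unfolding profile_dist_def profiles_def by (auto intro!: prod_nonneg simp: PiE_def Pi_def)
  have "(\<Sum>m\<in>profiles n M. profile_dist n M b x0 h jt m)
      = (\<Prod>l\<in>{1..n}. \<Sum>y\<in>M l. chain_dist (M l) (b l) x0 h (jt l) y)"
    unfolding profile_dist_def profiles_def using assms
    by (subst prod_sum_PiE) (auto simp: stochastic_rates_def)
  also have "\<dots> = 1" using chain by simp
  finally show "(\<Sum>m\<in>profiles n M. profile_dist n M b x0 h jt m) = 1" .
qed

lemma profile_dist_start:
  assumes "i \<in> {1..n}" "jt i = 0" "m i \<noteq> x0"
  shows "profile_dist n M b x0 h jt m = 0"
  unfolding profile_dist_def using assms by (intro prod_zero) (auto intro!: bexI[of _ i])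

lemma Min_le_convex_combination:
  fixes f :: "'a \<Rightarrow> real"
  assumes "finite S" "finite T" "\<forall>x\<in>S. 0 \<le> w x" "(\<Sum>x\<in>S. w x) = 1" "\<forall>x\<in>S. g x \<in> T"
  shows "Min (f ` T) \<le> (\<Sum>x\<in>S. w x * f (g x))"
proof -
  have "Min (f ` T) = (\<Sum>x\<in>S. w x * Min (f ` T))" using assms(4) by (simp flip: sum_distrib_right)
  also have "\<dots> \<le> (\<Sum>x\<in>S. w x * f (g x))"
    using assms by (intro sum_mono mult_left_mono Min_le) auto
  finally show ?thesis .
qed

lemma sum_profiles_swap_upd:
  assumes "i \<in> {1..n}"
  shows "(\<Sum>m\<in>profiles n M. \<Sum>x\<in>M i. F m x) = (\<Sum>m\<in>profiles n M. \<Sum>y\<in>M i. F (m(i := y)) (m i))"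
proof -
  let ?Pr = "profiles n M"
  have "m(i := x) \<in> ?Pr" "m i \<in> M i" if "m \<in> ?Pr" "x \<in> M i" for m x
    using that assms unfolding profiles_def by (auto simp: PiE_def Pi_def extensional_def)
  then have "(\<Sum>(m, x)\<in>?Pr \<times> M i. F m x) = (\<Sum>(m, y)\<in>?Pr \<times> M i. F (m(i := y)) (m i))"
    by (intro sum.reindex_bij_witness[where i="\<lambda>(m, y). (m(i := y), m i)" and j="\<lambda>(m, y). (m(i := y), m i)"])
       auto
  then show ?thesis by (simp add: sum.cartesian_product)
qed

definition generator ::
  "(nat \<Rightarrow> 'm set) \<Rightarrow> (nat \<Rightarrow> 'm \<Rightarrow> 'm \<Rightarrow> real) \<Rightarrow> (nat \<Rightarrow> (nat \<Rightarrow> 'm) \<Rightarrow> real) \<Rightarrow> nat \<Rightarrow> (nat \<Rightarrow> 'm) \<Rightarrow> real" where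
  "generator M b f i m = (\<Sum>m'\<in>M i. (f i (m(i := m')) - f i m) * b i m' (m i))"

lemma virtual_revenue_generator:
  "virtual_revenue n M q P \<alpha> v m = (\<Sum>i=1..n. P i m + generator M \<alpha> (\<lambda>i. utility q P i v) i m)"
  unfolding virtual_revenue_def generator_def ..

definition smoothed ::
  "nat \<Rightarrow> (nat \<Rightarrow> 'm set) \<Rightarrow> (nat \<Rightarrow> 'm \<Rightarrow> 'm \<Rightarrow> real) \<Rightarrow> 'm \<Rightarrow> real
     \<Rightarrow> (nat \<Rightarrow> (nat \<Rightarrow> 'm) \<Rightarrow> real) \<Rightarrow> nat \<Rightarrow> (nat \<Rightarrow> nat) \<Rightarrow> real" where
  "smoothed n M b x0 h f i jt = (\<Sum>m\<in>profiles n M. profile_dist n M b x0 h jt m * f i m)"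

lemma smoothed_step:
  assumes i: "i \<in> {1..n}"
  shows "smoothed n M b x0 h f i (jt(i := Suc (jt i)))
    = smoothed n M b x0 h f i jt + h * smoothed n M b x0 h (generator M b f) i jt"
proof -
  let ?Pr = "profiles n M"
  define \<nu> where "\<nu> s = chain_dist (M i) (b i) x0 h s" for s
  define R where "R m = (\<Prod>l\<in>{1..n}-{i}. chain_dist (M l) (b l) x0 h (jt l) (m l))" for m
  define g where "g m = f i m" for m
  have factor: "profile_dist n M b x0 h (jt(i := s)) m = \<nu> s (m i) * R m" for s m
    unfolding profile_dist_def R_def \<nu>_def using i by (subst prod.remove[of _ i]) auto
  have R_upd: "R (m(i := y)) = R m" for m y
    unfolding R_def by (rule prod.cong) auto
  have "smoothed n M b x0 h f i (jt(i := Suc (jt i)))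
      = (\<Sum>m\<in>?Pr. \<nu> (jt i) (m i) * R m * g m)
        - h * (\<Sum>m\<in>?Pr. \<Sum>z\<in>M i. \<nu> (jt i) (m i) * b i z (m i) * R m * g m)
        + h * (\<Sum>m\<in>?Pr. \<Sum>x\<in>M i. \<nu> (jt i) x * b i (m i) x * R m * g m)"
    unfolding smoothed_def factor g_def
    by (simp add: \<nu>_def sum.distrib sum_subtractf sum_distrib_left sum_distrib_right algebra_simps)
  also have "(\<Sum>m\<in>?Pr. \<Sum>x\<in>M i. \<nu> (jt i) x * b i (m i) x * R m * g m)
      = (\<Sum>m\<in>?Pr. \<Sum>y\<in>M i. \<nu> (jt i) (m i) * b i y (m i) * R m * g (m(i := y)))"
    using sum_profiles_swap_upd[OF i, where F="\<lambda>m x. \<nu> (jt i) x * b i (m i) x * R m * g m"]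
    by (simp add: R_upd)
  also have "(\<Sum>m\<in>?Pr. \<nu> (jt i) (m i) * R m * g m)
        - h * (\<Sum>m\<in>?Pr. \<Sum>z\<in>M i. \<nu> (jt i) (m i) * b i z (m i) * R m * g m)
        + h * (\<Sum>m\<in>?Pr. \<Sum>y\<in>M i. \<nu> (jt i) (m i) * b i y (m i) * R m * g (m(i := y)))
      = smoothed n M b x0 h f i jt + h * smoothed n M b x0 h (generator M b f) i jt"
    using factor[of "jt i"]
    by (simp add: smoothed_def generator_def g_def sum.distrib sum_subtractf sum_distrib_left
        sum_distrib_right algebra_simps)
  finally show ?thesis .
qed

lemma is_mechanism_smoothed:
  assumes mech: "is_mechanism n M x0 q P" and rates: "stochastic_rates n M x0 b h" and "d 0 = 0"
  shows "is_mechanism n (\<lambda>_. {0..k}) 0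
           (smoothed n M b x0 h q) (\<lambda>i jt. smoothed n M b x0 h P i jt + d (jt i))"
proof -
  let ?Pr = "profiles n M"
  let ?W = "profile_dist n M b x0 h"
  have mech_at: "(\<forall>i\<in>{1..n}. 0 \<le> q i m \<and> q i m \<le> 1) \<and> (\<Sum>i=1..n. q i m) \<le> 1 \<and>
        (\<forall>i\<in>{1..n}. q i (m(i := x0)) = 0 \<and> P i (m(i := x0)) = 0)" if "m \<in> ?Pr" for m
    using mech that unfolding is_mechanism_def by blast
  note W = profile_dist_distribution[OF rates]
  have opt_out: "?W (jt(i := 0)) m * f m = 0"
    if "i \<in> {1..n}" "m \<in> ?Pr" "\<forall>m\<in>?Pr. f (m(i := x0)) = 0" for i jt m f
  proof (cases "m i = x0")
    case True
    then show ?thesis using that by (metis fun_upd_triv mult_zero_right)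
  qed (use that profile_dist_start[of i n "jt(i := 0)" m x0] in auto)
  show ?thesis
    unfolding is_mechanism_def
  proof (intro conjI ballI)
    fix jt i assume i: "i \<in> {1..n}"
    have "0 \<le> smoothed n M b x0 h q i jt"
      unfolding smoothed_def using W mech_at i by (intro sum_nonneg mult_nonneg_nonneg) auto
    moreover have "smoothed n M b x0 h q i jt \<le> (\<Sum>m\<in>?Pr. ?W jt m * 1)"
      unfolding smoothed_def using W mech_at i by (intro sum_mono mult_left_mono) auto
    ultimately show "0 \<le> smoothed n M b x0 h q i jt" "smoothed n M b x0 h q i jt \<le> 1" using W by auto
    show "smoothed n M b x0 h q i (jt(i := 0)) = 0" "smoothed n M b x0 h P i (jt(i := 0)) + d ((jt(i := 0)) i) = 0"
      unfolding smoothed_def using opt_out[OF i] mech_at i \<open>d 0 = 0\<close> by (auto intro!: sum.neutral)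
  next
    fix jt
    have "(\<Sum>i=1..n. smoothed n M b x0 h q i jt) = (\<Sum>m\<in>?Pr. ?W jt m * (\<Sum>i=1..n. q i m))"
      unfolding smoothed_def sum_distrib_left by (rule sum.swap)
    also have "\<dots> \<le> (\<Sum>m\<in>?Pr. ?W jt m * 1)"
      using W mech_at by (intro sum_mono mult_left_mono) auto
    finally show "(\<Sum>i=1..n. smoothed n M b x0 h q i jt) \<le> 1" using W by simp
  qed simp_all
qed

lemma utility_smoothed:
  "utility (smoothed n M b x0 h q) (\<lambda>i jt. smoothed n M b x0 h P i jt + d (jt i)) i v jt
     = smoothed n M b x0 h (\<lambda>i. utility q P i v) i jt - d (jt i)"
  unfolding utility_def smoothed_def
  by (simp add: sum_distrib_left sum_subtractf right_diff_distrib algebra_simps)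

lemma sum_ladder_alpha:
  "(\<Sum>j'\<in>{0..k}. f j' * ladder_alpha a i j' j) = (if j < k then f (Suc j) * a else 0)"
proof -
  have "(\<lambda>j'. f j' * ladder_alpha a i j' j) = (\<lambda>j'. if j' = Suc j then f (Suc j) * a else 0)"
    by (auto simp: ladder_alpha_def fun_eq_iff)
  then show ?thesis by (simp only:) (simp add: sum.delta')
qed

lemma generator_utility_affine:
  "generator M \<alpha> (\<lambda>i. utility q P i v) i m
     = (1 - v) * generator M \<alpha> (\<lambda>i. utility q P i 0) i m + v * generator M \<alpha> (\<lambda>i. utility q P i 1) i m"
  unfolding generator_def utility_def
  by (simp add: sum_distrib_left sum.distrib[symmetric] algebra_simps)

lemma generator_utility_bounded:
  assumes "finite S"
  obtains B :: real where "0 \<le> B"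
    and "\<And>i m v. (i, m) \<in> S \<Longrightarrow> 0 \<le> v \<Longrightarrow> v \<le> 1 \<Longrightarrow> generator M \<alpha> (\<lambda>i. utility q P i v) i m \<le> B"
proof
  let ?g = "\<lambda>v i m. generator M \<alpha> (\<lambda>i. utility q P i v) i m"
  define B where "B = (\<Sum>(i, m)\<in>S. \<bar>?g 0 i m\<bar> + \<bar>?g 1 i m\<bar>)"
  show "0 \<le> B" unfolding B_def by (intro sum_nonneg) auto
  fix i m and v :: real assume S: "(i, m) \<in> S" and v: "0 \<le> v" "v \<le> 1"
  have scaled: "c * x \<le> \<bar>x\<bar>" if "0 \<le> c" "c \<le> 1" for c x :: real
    using mult_left_mono[OF abs_ge_self[of x] that(1)] mult_left_le_one_le[OF abs_ge_zero[of x] that] by linarith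
  have "(1 - v) * ?g 0 i m \<le> \<bar>?g 0 i m\<bar>" "v * ?g 1 i m \<le> \<bar>?g 1 i m\<bar>"
    using v by (auto intro: scaled)
  then have "?g v i m \<le> \<bar>?g 0 i m\<bar> + \<bar>?g 1 i m\<bar>" by (simp add: generator_utility_affine[of _ _ _ _ v])
  also have "\<dots> \<le> B"
    unfolding B_def using member_le_sum[OF S _ assms, of "\<lambda>(i, m). \<bar>?g 0 i m\<bar> + \<bar>?g 1 i m\<bar>"] by auto
  finally show "?g v i m \<le> B" .
qed

lemma fee_schedule_exists:
  fixes a B \<epsilon> :: real
  assumes "0 < a" "0 \<le> B" "0 < \<epsilon>"
  obtains k d where "1 \<le> k" "d 0 = 0" "d k = B" "\<forall>j<k. - \<epsilon> \<le> (1 + a) * d j - a * d (Suc j)"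
proof -
  define r where "r = a / (1 + a)"
  have r: "0 < r" "r < 1" "(1 + a) * r = a" using assms(1) by (auto simp: r_def)
  have "0 < \<epsilon> / (a * B + 1)" using assms by (simp add: add_nonneg_pos)
  then obtain N where N: "r ^ N < \<epsilon> / (a * B + 1)"
    using real_arch_pow_inv r by blast
  \<comment> \<open>The correction vanishes for \<open>0 < j < k\<close>; at \<open>j = 0\<close> it is \<open>- a B r ^ N\<close>.\<close>
  define d where "d j = (if j = 0 then 0 else B * r ^ (Suc N - j))" for j
  have "- \<epsilon> \<le> (1 + a) * d j - a * d (Suc j)" if "j < Suc N" for j
  proof (cases "j = 0")
    case True
    have "a * B * r ^ N \<le> (a * B + 1) * r ^ N" using r by simp
    also have "\<dots> < \<epsilon>" using N assms by (simp add: pos_less_divide_eq mult.commute add_nonneg_pos)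
    finally show ?thesis using True by (simp add: d_def)
  next
    case False
    have "Suc N - j = Suc (Suc N - Suc j)" using that by simp
    then have "(1 + a) * d j = a * d (Suc j)"
      using False r(3) by (simp add: d_def mult.left_commute[of "1 + a"] mult.assoc[symmetric])
    then show ?thesis using assms by simp
  qed
  then show ?thesis using that[of "Suc N" d] by (simp add: d_def)
qed

lemma smoothed_virtual_revenue_term_ge:
  fixes n :: nat and M :: "nat \<Rightarrow> 'm set" and x0 :: 'm and \<alpha> :: "nat \<Rightarrow> 'm \<Rightarrow> 'm \<Rightarrow> real"
    and q P :: "nat \<Rightarrow> (nat \<Rightarrow> 'm) \<Rightarrow> real" and v a h \<epsilon> :: real and d :: "nat \<Rightarrow> real"
  defines "Qt \<equiv> smoothed n M \<alpha> x0 h q" and "Pt \<equiv> \<lambda>i jt. smoothed n M \<alpha> x0 h P i jt + d (jt i)"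
    and "G \<equiv> generator M \<alpha> (\<lambda>i. utility q P i v)"
  assumes rates: "stochastic_rates n M x0 \<alpha> h" and ah: "a * h = 1" and i: "i \<in> {1..n}"
    and "jt i \<le> k" and fee: "\<forall>j<k. - \<epsilon> \<le> (1 + a) * d j - a * d (Suc j)"
    and top: "\<forall>m\<in>profiles n M. G i m \<le> d k" and "0 \<le> \<epsilon>"
  shows "smoothed n M \<alpha> x0 h (\<lambda>i m. P i m + G i m) i jt - \<epsilon>
    \<le> Pt i jt + (\<Sum>j'\<in>{0..k}. (utility Qt Pt i v (jt(i := j')) - utility Qt Pt i v jt) * ladder_alpha a i j' (jt i))"
proof -
  let ?S = "smoothed n M \<alpha> x0 h"
  have split: "?S (\<lambda>i m. P i m + G i m) i jt = ?S P i jt + ?S G i jt"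
    by (simp add: smoothed_def distrib_left sum.distrib)
  have U: "utility Qt Pt i v jt' = ?S (\<lambda>i. utility q P i v) i jt' - d (jt' i)" for jt'
    unfolding Qt_def Pt_def by (rule utility_smoothed)
  show ?thesis
  proof (cases "jt i < k")
    case True
    have step: "utility Qt Pt i v (jt(i := Suc (jt i))) - utility Qt Pt i v jt
        = h * ?S G i jt - d (Suc (jt i)) + d (jt i)"
      unfolding U G_def using smoothed_step[OF i, of M \<alpha> x0 h "\<lambda>i. utility q P i v" jt] by simp
    have "Pt i jt + (\<Sum>j'\<in>{0..k}. (utility Qt Pt i v (jt(i := j')) - utility Qt Pt i v jt) * ladder_alpha a i j' (jt i))
        = ?S P i jt + (a * h) * ?S G i jt + ((1 + a) * d (jt i) - a * d (Suc (jt i)))"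
      unfolding sum_ladder_alpha if_P[OF True] step by (simp add: Pt_def algebra_simps)
    then show ?thesis using fee True split ah by simp
  next
    case False
    then have "jt i = k" using \<open>jt i \<le> k\<close> by simp
    note W = profile_dist_distribution[OF rates]
    have "?S G i jt \<le> (\<Sum>m\<in>profiles n M. profile_dist n M \<alpha> x0 h jt m * d k)"
      unfolding smoothed_def using W top by (intro sum_mono mult_left_mono) auto
    also have "\<dots> = d k" using W by (simp flip: sum_distrib_right)
    finally show ?thesis
      unfolding sum_ladder_alpha using False \<open>jt i = k\<close> split \<open>0 \<le> \<epsilon>\<close> by (simp add: Pt_def)
  qed
qed

lemma virtual_revenue_smoothed_ge:
  fixes a h \<epsilon> :: real and d :: "nat \<Rightarrow> real"
  assumes rates: "stochastic_rates n M x0 \<alpha> h" and "a * h = 1"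
    and jt: "jt \<in> profiles n (\<lambda>_. {0..k})" and "\<forall>j<k. - \<epsilon> \<le> (1 + a) * d j - a * d (Suc j)"
    and "\<forall>i\<in>{1..n}. \<forall>m\<in>profiles n M. generator M \<alpha> (\<lambda>i. utility q P i v) i m \<le> d k"
    and "0 \<le> \<epsilon>"
  shows "min_virtual_revenue n M q P \<alpha> v - real n * \<epsilon>
    \<le> virtual_revenue n (\<lambda>_. {0..k}) (smoothed n M \<alpha> x0 h q)
         (\<lambda>i jt. smoothed n M \<alpha> x0 h P i jt + d (jt i)) (ladder_alpha a) v jt"
proof -
  let ?Pr = "profiles n M"
  let ?W = "profile_dist n M \<alpha> x0 h jt"
  let ?G = "generator M \<alpha> (\<lambda>i. utility q P i v)"
  have fin: "finite ?Pr" using rates by (intro finite_profiles) (simp add: stochastic_rates_def)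
  note W = profile_dist_distribution[OF rates]
  have "min_virtual_revenue n M q P \<alpha> v \<le> (\<Sum>m\<in>?Pr. ?W m * virtual_revenue n M q P \<alpha> v m)"
    unfolding min_virtual_revenue_def using fin W by (intro Min_le_convex_combination) auto
  also have "\<dots> = (\<Sum>i=1..n. smoothed n M \<alpha> x0 h (\<lambda>i m. P i m + ?G i m) i jt)"
    unfolding virtual_revenue_generator smoothed_def sum_distrib_left by (rule sum.swap)
  finally have "min_virtual_revenue n M q P \<alpha> v - real n * \<epsilon>
      \<le> (\<Sum>i=1..n. smoothed n M \<alpha> x0 h (\<lambda>i m. P i m + ?G i m) i jt - \<epsilon>)"
    by (simp add: sum_subtractf)
  also have "\<dots> \<le> virtual_revenue n (\<lambda>_. {0..k}) (smoothed n M \<alpha> x0 h q)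
         (\<lambda>i jt. smoothed n M \<alpha> x0 h P i jt + d (jt i)) (ladder_alpha a) v jt"
    unfolding virtual_revenue_def using jt assms
    by (intro sum_mono smoothed_virtual_revenue_term_ge) (auto simp: profiles_def)
  finally show ?thesis .
qed

lemma stochastic_rates_inverse_total:
  assumes "\<forall>i\<in>{1..n}. finite (M i) \<and> x0 \<in> M i"
    and \<alpha>: "\<forall>i\<in>{1..n}. \<forall>y\<in>M i. \<forall>x\<in>M i. 0 \<le> \<alpha> i y x"
  shows "stochastic_rates n M x0 \<alpha> (1 / (1 + (\<Sum>i=1..n. \<Sum>x\<in>M i. \<Sum>y\<in>M i. \<alpha> i y x)))"
proof -
  define T where "T = (\<Sum>i=1..n. \<Sum>x\<in>M i. \<Sum>y\<in>M i. \<alpha> i y x)"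
  have row_le: "(\<Sum>z\<in>M i. \<alpha> i z y) \<le> T" if i: "i \<in> {1..n}" and y: "y \<in> M i" for i y
  proof -
    have "(\<Sum>z\<in>M i. \<alpha> i z y) \<le> (\<Sum>x\<in>M i. \<Sum>z\<in>M i. \<alpha> i z x)"
      using assms i y by (intro member_le_sum[where f="\<lambda>x. \<Sum>z\<in>M i. \<alpha> i z x"]) (auto intro: sum_nonneg)
    also have "\<dots> \<le> T"
      unfolding T_def using \<alpha> i by (intro member_le_sum[where f="\<lambda>i. \<Sum>x\<in>M i. \<Sum>z\<in>M i. \<alpha> i z x"])
        (auto intro!: sum_nonneg)
    finally show ?thesis .
  qed
  have "0 \<le> T" unfolding T_def using \<alpha> by (intro sum_nonneg) auto
  then have "(1 / (1 + T)) * (\<Sum>z\<in>M i. \<alpha> i z y) \<le> 1" if "i \<in> {1..n}" "y \<in> M i" for i y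
    using row_le[OF that] by (simp add: field_simps)
  then show ?thesis
    unfolding stochastic_rates_def T_def[symmetric] using assms \<open>0 \<le> T\<close> by auto
qed

lemma ladder_mechanism_exists:
  fixes \<epsilon> :: real
  assumes mech: "is_mechanism n M x0 q P"
    and \<alpha>: "\<forall>i\<in>{1..n}. \<forall>m'\<in>M i. \<forall>mi\<in>M i. 0 \<le> \<alpha> i m' mi" and "0 < \<epsilon>"
  obtains a :: real and k :: nat and qt Pt :: "nat \<Rightarrow> (nat \<Rightarrow> nat) \<Rightarrow> real"
  where "0 < a" "1 \<le> k" "is_mechanism n (\<lambda>_. {0..k}) 0 qt Pt"
    and "\<And>v mt. 0 \<le> v \<Longrightarrow> v \<le> 1 \<Longrightarrow> mt \<in> profiles n (\<lambda>_. {0..k}) \<Longrightarrow>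
           min_virtual_revenue n M q P \<alpha> v - real n * \<epsilon> \<le> virtual_revenue n (\<lambda>_. {0..k}) qt Pt (ladder_alpha a) v mt"
proof -
  have M: "\<forall>i\<in>{1..n}. finite (M i) \<and> x0 \<in> M i" using mech unfolding is_mechanism_def by blast
  define a where "a = 1 + (\<Sum>i=1..n. \<Sum>x\<in>M i. \<Sum>y\<in>M i. \<alpha> i y x)"
  have rates: "stochastic_rates n M x0 \<alpha> (1 / a)"
    unfolding a_def using M \<alpha> by (intro stochastic_rates_inverse_total) auto
  then have "0 < a" unfolding stochastic_rates_def a_def using \<alpha> by (auto intro!: add_pos_nonneg sum_nonneg)
  have "finite ({1..n} \<times> profiles n M)" using M by (simp add: finite_profiles)
  then obtain B where "0 \<le> B" and B: "\<And>i m v. (i, m) \<in> {1..n} \<times> profiles n M \<Longrightarrow> 0 \<le> v \<Longrightarrow> v \<le> 1 \<Longrightarrow>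
      generator M \<alpha> (\<lambda>i. utility q P i v) i m \<le> B"
    using generator_utility_bounded[where M=M and \<alpha>=\<alpha> and q=q and P=P] by blast
  obtain k d where "1 \<le> k" "d 0 = 0" "d k = B" and fee: "\<forall>j<k. - \<epsilon> \<le> (1 + a) * d j - a * d (Suc j)"
    using fee_schedule_exists[OF \<open>0 < a\<close> \<open>0 \<le> B\<close> \<open>0 < \<epsilon>\<close>] .
  show ?thesis
  proof (rule that[OF \<open>0 < a\<close> \<open>1 \<le> k\<close> is_mechanism_smoothed[where d=d and k=k, OF mech rates \<open>d 0 = 0\<close>]])
    fix v :: real and mt assume "0 \<le> v" "v \<le> 1" "mt \<in> profiles n (\<lambda>_. {0..k})"
    then show "min_virtual_revenue n M q P \<alpha> v - real n * \<epsilon> \<le> virtual_revenue n (\<lambda>_. {0..k})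
        (smoothed n M \<alpha> x0 (1 / a) q) (\<lambda>i jt. smoothed n M \<alpha> x0 (1 / a) P i jt + d (jt i)) (ladder_alpha a) v mt"
      using B \<open>d k = B\<close> \<open>0 < a\<close> \<open>0 < \<epsilon>\<close>
      by (intro virtual_revenue_smoothed_ge[OF rates _ _ fee]) auto
  qed
qed

section \<open>Symmetrization\<close>

lemma upd_comp_inv_permutes:
  "\<sigma> permutes S \<Longrightarrow> m(i := x) \<circ> inv \<sigma> = (m \<circ> inv \<sigma>)(\<sigma> i := x)"
  by (auto simp: fun_eq_iff permutes_inv_eq)

lemma comp_inv_permutes_in_profiles:
  assumes "\<sigma> permutes {1..n}" "m \<in> profiles n (\<lambda>_. A)"
  shows "m \<circ> inv \<sigma> \<in> profiles n (\<lambda>_. A)"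
proof -
  have inv: "inv \<sigma> permutes {1..n}" using assms(1) by (rule permutes_inv)
  then show ?thesis
    using assms(2) permutes_in_image[OF inv] permutes_not_in[OF inv]
    unfolding profiles_def PiE_iff extensional_def by auto
qed

lemma generator_symmetrize:
  "generator (\<lambda>_. A) (\<lambda>_. \<beta>) (\<lambda>i. utility (symmetrize n q) (symmetrize n P) i v) i m
     = (\<Sum>\<sigma>\<in>{\<sigma>. \<sigma> permutes {1..n}}. generator (\<lambda>_. A) (\<lambda>_. \<beta>) (\<lambda>i. utility q P i v) (\<sigma> i) (m \<circ> inv \<sigma>)) / fact n"
proof -
  let ?Pm = "{\<sigma>. \<sigma> permutes {1..n}}"
  have U: "utility (symmetrize n q) (symmetrize n P) i v x = (\<Sum>\<sigma>\<in>?Pm. utility q P (\<sigma> i) v (x \<circ> inv \<sigma>)) / fact n" for x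
    unfolding utility_def symmetrize_def by (simp add: sum_subtractf sum_distrib_left diff_divide_distrib)
  have "(\<Sum>\<sigma>\<in>?Pm. generator (\<lambda>_. A) (\<lambda>_. \<beta>) (\<lambda>i. utility q P i v) (\<sigma> i) (m \<circ> inv \<sigma>))
      = (\<Sum>\<sigma>\<in>?Pm. \<Sum>j\<in>A. (utility q P (\<sigma> i) v (m(i := j) \<circ> inv \<sigma>) - utility q P (\<sigma> i) v (m \<circ> inv \<sigma>)) * \<beta> j (m i))"
    unfolding generator_def by (intro sum.cong) (auto simp: upd_comp_inv_permutes permutes_inverses)
  also have "\<dots> = (\<Sum>j\<in>A. ((\<Sum>\<sigma>\<in>?Pm. utility q P (\<sigma> i) v (m(i := j) \<circ> inv \<sigma>))
      - (\<Sum>\<sigma>\<in>?Pm. utility q P (\<sigma> i) v (m \<circ> inv \<sigma>))) * \<beta> j (m i))"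
    by (subst sum.swap) (simp add: sum_subtractf sum_distrib_right left_diff_distrib)
  finally show ?thesis
    unfolding generator_def U diff_divide_distrib[symmetric] times_divide_eq_left sum_divide_distrib[symmetric]
    by simp
qed

lemma virtual_revenue_symmetrize:
  "virtual_revenue n (\<lambda>_. A) (symmetrize n q) (symmetrize n P) (\<lambda>_. \<beta>) v m
     = (\<Sum>\<sigma>\<in>{\<sigma>. \<sigma> permutes {1..n}}. virtual_revenue n (\<lambda>_. A) q P (\<lambda>_. \<beta>) v (m \<circ> inv \<sigma>)) / fact n"
proof -
  let ?Pm = "{\<sigma>. \<sigma> permutes {1..n}}"
  define T where "T l y = P l y + generator (\<lambda>_. A) (\<lambda>_. \<beta>) (\<lambda>i. utility q P i v) l y" for l y
  have "virtual_revenue n (\<lambda>_. A) (symmetrize n q) (symmetrize n P) (\<lambda>_. \<beta>) v m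
      = (\<Sum>i=1..n. \<Sum>\<sigma>\<in>?Pm. T (\<sigma> i) (m \<circ> inv \<sigma>)) / fact n"
    unfolding virtual_revenue_generator generator_symmetrize T_def sum_divide_distrib
    by (simp add: symmetrize_def add_divide_distrib sum.distrib sum_divide_distrib)
  also have "\<dots> = (\<Sum>\<sigma>\<in>?Pm. \<Sum>i=1..n. T (\<sigma> i) (m \<circ> inv \<sigma>)) / fact n"
    by (subst sum.swap) simp
  also have "\<dots> = (\<Sum>\<sigma>\<in>?Pm. \<Sum>i=1..n. T i (m \<circ> inv \<sigma>)) / fact n"
  proof -
    have "(\<Sum>i=1..n. T (\<sigma> i) y) = (\<Sum>i=1..n. T i y)" if "\<sigma> permutes {1..n}" for \<sigma> y
      using sum.permute[OF that, of "\<lambda>i. T i y"] by (simp add: comp_def)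
    then show ?thesis by simp
  qed
  finally show ?thesis unfolding virtual_revenue_generator T_def .
qed

lemma min_virtual_revenue_le_symmetrize:
  assumes "finite A" and m: "m \<in> profiles n (\<lambda>_. A)"
  shows "min_virtual_revenue n (\<lambda>_. A) q P (\<lambda>_. \<beta>) v
    \<le> virtual_revenue n (\<lambda>_. A) (symmetrize n q) (symmetrize n P) (\<lambda>_. \<beta>) v m"
proof -
  let ?Pm = "{\<sigma>. \<sigma> permutes {1..n}}"
  have "card ?Pm = fact n" by (simp add: card_permutations)
  then have weights: "(\<Sum>\<sigma>\<in>?Pm. 1 / fact n) = (1 :: real)" by simp
  have "min_virtual_revenue n (\<lambda>_. A) q P (\<lambda>_. \<beta>) v
      \<le> (\<Sum>\<sigma>\<in>?Pm. 1 / fact n * virtual_revenue n (\<lambda>_. A) q P (\<lambda>_. \<beta>) v (m \<circ> inv \<sigma>))"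
    unfolding min_virtual_revenue_def using assms
    by (intro Min_le_convex_combination[OF _ _ _ weights])
       (simp_all add: finite_profiles finite_permutations comp_inv_permutes_in_profiles)
  then show ?thesis by (simp add: virtual_revenue_symmetrize sum_divide_distrib)
qed

text \<open>This holds for \<open>N = 0\<close> as well, where the grid is \<open>{0}\<close> since \<open>x / 0 = 0\<close>.\<close>

lemma value_grid_unit_interval: "v \<in> value_grid N \<Longrightarrow> 0 \<le> v \<and> v \<le> 1"
  unfolding value_grid_def by (auto simp: divide_le_eq_1)

theorem mainTheorem6:
  fixes n N :: nat and M :: "nat \<Rightarrow> 'm set" and oo :: 'm
    and q P :: "nat \<Rightarrow> (nat \<Rightarrow> 'm) \<Rightarrow> real"
    and \<alpha> :: "nat \<Rightarrow> 'm \<Rightarrow> 'm \<Rightarrow> real" and \<epsilon> :: real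
  assumes "N \<ge> 1"
    and "is_mechanism n M oo q P"
    and "\<forall>i\<in>{1..n}. \<forall>m'\<in>M i. \<forall>mi\<in>M i. \<alpha> i m' mi \<ge> 0"
    and "\<epsilon> > 0"
  shows "(\<exists>(a::real) (k::nat) (qt::nat \<Rightarrow> (nat \<Rightarrow> nat) \<Rightarrow> real) (Pt::nat \<Rightarrow> (nat \<Rightarrow> nat) \<Rightarrow> real).
            a > 0 \<and> k \<ge> 1 \<and> is_mechanism n (\<lambda>_. {0..k}) 0 qt Pt \<and>
            (\<forall>v\<in>value_grid N. \<forall>mt\<in>profiles n (\<lambda>_. {0..k}).
               virtual_revenue n (\<lambda>_. {0..k}) qt Pt (ladder_alpha a) v mt
                 \<ge> min_virtual_revenue n M q P \<alpha> v - real n * \<epsilon>))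
       \<and> (\<forall>(k::nat) (a::real) (q2::nat \<Rightarrow> (nat \<Rightarrow> nat) \<Rightarrow> real) (P2::nat \<Rightarrow> (nat \<Rightarrow> nat) \<Rightarrow> real).
            a > 0 \<longrightarrow> is_mechanism n (\<lambda>_. {0..k}) 0 q2 P2 \<longrightarrow>
            (\<forall>v\<in>value_grid N. \<forall>m\<in>profiles n (\<lambda>_. {0..k}).
               virtual_revenue n (\<lambda>_. {0..k}) (symmetrize n q2) (symmetrize n P2) (ladder_alpha a) v m
                 \<ge> min_virtual_revenue n (\<lambda>_. {0..k}) q2 P2 (ladder_alpha a) v))"
proof -
  have ladder_alpha_uniform: "ladder_alpha a = (\<lambda>_. ladder_alpha a 0)" for a
    by (simp add: fun_eq_iff ladder_alpha_def)
  obtain a k qt Pt where "0 < a" "1 \<le> k" "is_mechanism n (\<lambda>_. {0..k}) 0 qt Pt"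
    and "\<And>v mt. 0 \<le> v \<Longrightarrow> v \<le> 1 \<Longrightarrow> mt \<in> profiles n (\<lambda>_. {0..k}) \<Longrightarrow>
           min_virtual_revenue n M q P \<alpha> v - real n * \<epsilon> \<le> virtual_revenue n (\<lambda>_. {0..k}) qt Pt (ladder_alpha a) v mt"
    by (rule ladder_mechanism_exists[OF assms(2-4)]) blast
  moreover have "min_virtual_revenue n (\<lambda>_. {0..k}) q2 P2 (ladder_alpha a) v
      \<le> virtual_revenue n (\<lambda>_. {0..k}) (symmetrize n q2) (symmetrize n P2) (ladder_alpha a) v m"
    if "m \<in> profiles n (\<lambda>_. {0..k})" for k a q2 P2 v m
    using min_virtual_revenue_le_symmetrize[OF finite_atLeastAtMost that] ladder_alpha_uniform by metis
  ultimately show ?thesis using value_grid_unit_interval by blast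
qed

end
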